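(* Let $m\ge 1$ and $1\le t\le 2^{m-1}$ be integers and $p=t/2^m$. For $j=1,\dots,m$ let \[ a_j(t)=\min\big(t \bmod 2^{m-j+1},\;2^{m-j+1}-(t\bmod 2^{m-j+1})\big). \] Let $f:\{0,1\}^n\to\mathbb{R}$ and $g=\mathrm{Red}(f):\{0,1\}^{mn}\to\mathbb{R}$ as defined below. For $S\subseteq\{1,\dots,mn\}$ let $S_i=S\cap\{(i-1)m+1,\dots,im\}$, let $S'=\{i:|S_i|>0\}$, $k=|S'|$, and for $i\in S'$ let $s_i=\max(S_i)-(i-1)m$. Then \[ |\hat g(S)|=\Big(\prod_{i\in S'}\frac{a_{s_i}(t)}{t}\Big)\Big(\sqrt{\tfrac{p}{1-p}}\Big)^k|\hat f(S')|. \] Furthermore, if $s_i\le\lfloor\log(1/p)\rfloor$ for every $i\in S'$, then \[ \hat g(S)=\Big(-\sqrt{\tfrac{p}{1-p}}\Big)^k(-1)^{|S|}\hat f(S'). \] Here $\hat g$ is w.r.t. the uniform measure on $\{0,1\}^{mn}$ and $\hat f$ w.r.t. $\mu_p$.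
   Context: For $0<p<1$, $\mu_p$ denotes the product measure on $\{0,1\}^n$ with $\mu_p(x)=p^{\sum_i x_i}(1-p)^{n-\sum_i x_i}$; $\mu_{1/2}$ is the uniform measure. Elements of $\{0,1\}^n$ are identified with subsets of $\{1,\dots,n\}$. For $S,T\subseteq\{1,\dots,n\}$, $u_S(T)=\big(-\sqrt{(1-p)/p}\big)^{|S\cap T|}\big(\sqrt{p/(1-p)}\big)^{|S\setminus T|}$ (for $p=1/2$, $u_S(T)=(-1)^{|S\cap T|}$); these form an orthonormal basis of $L^2(\mu_p)$ and $\hat f(S)=\mathbb{E}_{\mu_p}[fu_S]$. Reduction: write $y\in\{0,1\}^{mn}$ as $(y^1,\dots,y^n)$, $y^i=(y^i_1,\dots,y^i_m)\in\{0,1\}^m$, where $y^i_j$ is coordinate $(i-1)m+j$ of $y$. Let $\mathrm{Bin}(y^i)=\sum_{j=0}^{m-1}2^jy^i_{m-j}$, $h(y^i)=1$ if $\mathrm{Bin}(y^i)\ge 2^m-t$ and $0$ otherwise, and $g=\mathrm{Red}(f)$, $g(y)=f(h(y^1),\dots,h(y^n))$. $\log$ is base 2. *)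

theory Defs
  imports Complex_Main
begin

text \<open>Points of {0,1}^n are identified with subsets of {1..n}.\<close>

definition mu :: "real \<Rightarrow> nat \<Rightarrow> nat set \<Rightarrow> real" where
  "mu p n T = p ^ card T * (1 - p) ^ (n - card T)"

definition ubasis :: "real \<Rightarrow> nat set \<Rightarrow> nat set \<Rightarrow> real" where
  "ubasis p S T = (- sqrt ((1 - p) / p)) ^ card (S \<inter> T) * (sqrt (p / (1 - p))) ^ card (S - T)"

definition fourier :: "real \<Rightarrow> nat \<Rightarrow> (nat set \<Rightarrow> real) \<Rightarrow> nat set \<Rightarrow> real" where
  "fourier p n f S = (\<Sum>T\<in>Pow {1..n}. mu p n T * f T * ubasis p S T)"

text \<open>y^i_j is coordinate (i-1)m+j of y; Bin(y^i) = sum_{j=0}^{m-1} 2^j y^i_{m-j}.\<close>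
definition Bin :: "nat \<Rightarrow> nat set \<Rightarrow> nat \<Rightarrow> nat" where
  "Bin m y i = (\<Sum>j<m. 2 ^ j * (if (i - 1) * m + (m - j) \<in> y then 1 else 0))"

definition hbit :: "nat \<Rightarrow> nat \<Rightarrow> nat set \<Rightarrow> nat \<Rightarrow> bool" where
  "hbit m t y i = (Bin m y i \<ge> 2 ^ m - t)"

definition Red :: "nat \<Rightarrow> nat \<Rightarrow> nat \<Rightarrow> (nat set \<Rightarrow> real) \<Rightarrow> nat set \<Rightarrow> real" where
  "Red m t n f y = f {i \<in> {1..n}. hbit m t y i}"

definition acoef :: "nat \<Rightarrow> nat \<Rightarrow> nat \<Rightarrow> nat" where
  "acoef m t j = min (t mod 2 ^ (m - j + 1)) (2 ^ (m - j + 1) - t mod 2 ^ (m - j + 1))"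

definition block :: "nat \<Rightarrow> nat set \<Rightarrow> nat \<Rightarrow> nat set" where
  "block m S i = S \<inter> {(i - 1) * m + 1 .. i * m}"

definition blocksupp :: "nat \<Rightarrow> nat \<Rightarrow> nat set \<Rightarrow> nat set" where
  "blocksupp m n S = {i \<in> {1..n}. card (block m S i) > 0}"

definition topidx :: "nat \<Rightarrow> nat set \<Rightarrow> nat \<Rightarrow> nat" where
  "topidx m S i = Max (block m S i) - (i - 1) * m"

end

theory Submission
  imports Defs
begin

text \<open>
  Each reduced bit h(y^i) depends only on block i of y, and the uniform character of S factorises
  over the blocks, so the coefficient of g factorises into one sum over {0,1}^m per block. In block i
  the two sums (over the inputs with h = 1 and with h = 0) are sums of the Walsh character of J, the
  bits of S in that block, over the top t and the bottom 2^m - t values of Bin. Since the character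
  sums to zero over all 2^m values they are sigma and -sigma, and after normalisation they are a
  scalar times the one-coordinate factors of mu_p and u_S', whose product is the coefficient of f.
  If j0 is the least element of J, the prefix sums of the character form a triangle wave of period
  2^(j0+1), so |sigma| = a_(s_i)(t); and if t <= 2^j0, every bit of J is set in all of the top t
  values, so sigma = (-1)^|J| t.
\<close>

lemma sum_Pow_Un_disjoint:
  assumes "finite A" "finite B" "A \<inter> B = {}"
  shows "(\<Sum>Z\<in>Pow (A \<union> B). G Z) = (\<Sum>Y\<in>Pow A. \<Sum>W\<in>Pow B. G (Y \<union> W))"
proof -
  have "(\<Sum>Z\<in>Pow (A \<union> B). G Z) = (\<Sum>(Y, W)\<in>Pow A \<times> Pow B. G (Y \<union> W))"
    using assms(3)
    by (intro sum.reindex_bij_witness[of _ "\<lambda>(Y, W). Y \<union> W" "\<lambda>Z. (Z \<inter> A, Z \<inter> B)"])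
      (auto simp flip: Int_Un_distrib simp: Int_absorb2)
  then show ?thesis
    by (simp add: sum.cartesian_product)
qed

lemma sum_Pow_insert:
  assumes "finite A" "a \<notin> A"
  shows "(\<Sum>X\<in>Pow (insert a A). G X) = (\<Sum>X\<in>Pow A. G X + G (insert a X))"
proof -
  have "Pow {a} = {{}, {a}}"
    by auto
  then show ?thesis
    using sum_Pow_Un_disjoint[of A "{a}" G] assms by simp
qed

lemma sum_Pow_Suc_prod_mem:
  fixes F :: "nat set \<Rightarrow> 'a::comm_semiring_1"
  shows "(\<Sum>X\<in>Pow {1..Suc n}. F X * (\<Prod>i\<in>{1..Suc n}. g i (i \<in> X))) =
    (\<Sum>X\<in>Pow {1..n}. (\<Prod>i\<in>{1..n}. g i (i \<in> X)) *
      (g (Suc n) True * F (insert (Suc n) X) + g (Suc n) False * F X))"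
proof -
  have split: "(\<Sum>X\<in>Pow {1..Suc n}. G X) = (\<Sum>X\<in>Pow {1..n}. G X + G (insert (Suc n) X))"
    for G :: "nat set \<Rightarrow> 'a"
    using sum_Pow_insert[of "{1..n}" "Suc n" G] by (simp add: atLeastAtMostSuc_conv)
  have "F X * (\<Prod>i\<in>{1..Suc n}. g i (i \<in> X)) +
      F (insert (Suc n) X) * (\<Prod>i\<in>{1..Suc n}. g i (i \<in> insert (Suc n) X)) =
    (\<Prod>i\<in>{1..n}. g i (i \<in> X)) * (g (Suc n) True * F (insert (Suc n) X) + g (Suc n) False * F X)"
    if "X \<in> Pow {1..n}" for X
  proof -
    have "(\<Prod>i\<in>{1..n}. g i (i \<in> insert (Suc n) X)) = (\<Prod>i\<in>{1..n}. g i (i \<in> X))"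
      by (intro prod.cong) auto
    moreover have "Suc n \<notin> X"
      using that by auto
    ultimately show ?thesis
      by (simp add: prod.nat_ivl_Suc' algebra_simps)
  qed
  then show ?thesis
    unfolding split by (rule sum.cong[OF refl])
qed

lemma prod_if_mem_eq_power:
  "finite A \<Longrightarrow> (\<Prod>i\<in>A. if i \<in> X then a else b) = a ^ card (A \<inter> X) * b ^ card (A - X)"
  by (simp add: prod.If_cases Diff_eq)

lemma subset_atLeastLessThan_Min:
  fixes J :: "nat set"
  shows "J \<subseteq> {..<m} \<Longrightarrow> J \<noteq> {} \<Longrightarrow> J \<subseteq> {Min J..<m}"
  using finite_subset[OF _ finite_lessThan, of J m] by (auto intro: Min_le)

lemma bit_iff_le_mod: "bit (N::nat) j \<longleftrightarrow> 2 ^ j \<le> N mod 2 ^ Suc j"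
proof -
  define u where "u = N mod 2 ^ Suc j"
  have "u div 2 ^ j < 2"
    by (simp add: u_def less_mult_imp_div_less mult.commute)
  then have "bit u j \<longleftrightarrow> u div 2 ^ j \<noteq> 0"
    by (cases "u div 2 ^ j") (auto simp: bit_iff_odd)
  moreover have "bit N j \<longleftrightarrow> bit u j"
    unfolding u_def by (simp only: bit_take_bit_iff flip: take_bit_eq_mod) simp
  ultimately show ?thesis
    unfolding u_def[symmetric] by (simp add: div_eq_0_iff not_less)
qed

lemma bit_div_mult_iff: "bit ((N::nat) div 2 ^ k * 2 ^ k) j \<longleftrightarrow> k \<le> j \<and> bit N j"
proof -
  have "N div 2 ^ k * 2 ^ k = push_bit k (drop_bit k N)"
    by (simp add: push_bit_eq_mult drop_bit_eq_div)
  then show ?thesis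
    by (auto simp: bit_push_bit_iff_nat bit_drop_bit_eq)
qed

section \<open>Walsh characters\<close>

definition walsh :: "nat set \<Rightarrow> nat \<Rightarrow> real" where
  "walsh J N = (-1) ^ card {j\<in>J. bit N j}"

definition tent :: "nat \<Rightarrow> nat \<Rightarrow> nat" where
  "tent L u = min u (L - u)"

lemma abs_walsh [simp]: "\<bar>walsh J N\<bar> = 1"
  by (simp add: walsh_def)

lemma walsh_split:
  assumes "finite J" "j0 \<in> J" "J \<subseteq> {j0..}"
  shows "walsh J N = (if bit N j0 then -1 else 1) * walsh J (N div 2 ^ Suc j0 * 2 ^ Suc j0)"
proof -
  define M where "M = N div 2 ^ Suc j0 * 2 ^ Suc j0"
  have high: "bit M j \<longleftrightarrow> j0 < j \<and> bit N j" for j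
    unfolding M_def by (simp only: bit_div_mult_iff Suc_le_eq)
  have "{j\<in>J. bit N j} = (if bit N j0 then {j0} else {}) \<union> {j\<in>J. bit M j}"
    using assms(2,3) by (force simp: high order_le_less)
  then show ?thesis
    unfolding walsh_def M_def[symmetric] using assms(1) by (auto simp: card_insert_if high)
qed

lemma sum_walsh_lessThan:
  assumes "finite J" "j0 \<in> J" "J \<subseteq> {j0..}"
  defines "L \<equiv> 2 ^ Suc j0"
  shows "(\<Sum>N<x. walsh J N) = walsh J (x div L * L) * real (tent L (x mod L))"
proof (induction x)
  case 0
  then show ?case by (simp add: tent_def)
next
  case (Suc x)
  define u where "u = x mod L"
  define k where "k = x div L"
  have L: "L = 2 * 2 ^ j0" by (simp add: L_def)
  then have "2 \<le> L" by simp
  have x: "x = k * L + u"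
    by (simp add: u_def k_def)
  have uL: "u < L"
    using L by (simp add: u_def)
  have walsh_x: "walsh J x = (if 2 ^ j0 \<le> u then -1 else 1) * walsh J (k * L)"
    using walsh_split[OF assms(1-3), of x] bit_iff_le_mod[of x j0]
    by (simp add: u_def k_def L_def)
  show ?case
  proof (cases "Suc u = L")
    case True
    then have "Suc x = Suc k * L"
      using x by simp
    then have "Suc x div L = Suc k" "Suc x mod L = 0"
      using \<open>2 \<le> L\<close> by simp_all
    moreover have "tent L u = 1"
      using True \<open>2 \<le> L\<close> by (simp add: tent_def)
    moreover have "2 ^ j0 \<le> u"
      using True L by simp
    ultimately show ?thesis
      using Suc.IH walsh_x by (simp add: u_def k_def tent_def)
  next
    case False
    with uL have "Suc u < L" "Suc x = Suc u + k * L"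
      using x by simp_all
    then have "Suc x div L = k" "Suc x mod L = Suc u"
      by (simp_all only: div_mult_self1 mod_mult_self1) simp_all
    moreover have "real (tent L (Suc u)) = real (tent L u) + (if 2 ^ j0 \<le> u then -1 else 1)"
      using False uL L by (auto simp: tent_def)
    ultimately show ?thesis
      using Suc.IH walsh_x by (simp add: u_def k_def algebra_simps)
  qed
qed

lemma tent_mod_diff:
  assumes "L dvd M" "t \<le> M"
  shows "tent L ((M - t) mod L) = tent L (t mod L)"
proof -
  have "int ((M - t) mod L) = (int M mod int L - int t) mod int L"
    using assms(2) by (simp add: of_nat_mod of_nat_diff mod_diff_left_eq)
  also have "\<dots> = (- int t) mod int L"
    using assms(1) by (simp flip: of_nat_mod)
  finally have "int ((M - t) mod L) = (if t mod L = 0 then 0 else int L - int (t mod L))"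
    by (simp only: zmod_zminus1_eq_if of_nat_mod[symmetric] of_nat_eq_0_iff)
  moreover have "t mod L \<le> L"
    using assms by (cases "L = 0") auto
  ultimately have "(M - t) mod L = (if t mod L = 0 then 0 else L - t mod L)"
    by (auto simp flip: of_nat_diff)
  then show ?thesis
    by (auto simp: tent_def)
qed

lemma sum_walsh_top_eq_neg_lessThan:
  assumes "finite J" "j0 \<in> J" "J \<subseteq> {j0..<m}" "t \<le> 2 ^ m"
  shows "(\<Sum>N\<in>{2^m-t..<2^m}. walsh J N) = - (\<Sum>N<2^m-t. walsh J N)"
proof -
  have "j0 < m"
    using assms(2,3) by auto
  then have "(2::nat) ^ m mod 2 ^ Suc j0 = 0"
    by (simp add: le_imp_power_dvd Suc_le_eq del: power_Suc)
  moreover have "J \<subseteq> {j0..}"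
    using assms(3) by auto
  ultimately have "(\<Sum>N<2^m. walsh J N) = 0"
    using sum_walsh_lessThan[of J j0 "2^m"] assms(1,2) by (simp add: tent_def del: power_Suc)
  moreover have "(\<Sum>N<2^m. walsh J N) = (\<Sum>N<2^m-t. walsh J N) + (\<Sum>N\<in>{2^m-t..<2^m}. walsh J N)"
    using sum.atLeastLessThan_concat[of 0 "2^m - t" "2^m" "walsh J"] by (simp add: lessThan_atLeast0)
  ultimately show ?thesis
    by simp
qed

lemma abs_sum_walsh_top:
  assumes "finite J" "j0 \<in> J" "J \<subseteq> {j0..<m}" "t \<le> 2 ^ m"
  shows "\<bar>\<Sum>N\<in>{2^m-t..<2^m}. walsh J N\<bar> = real (tent (2 ^ Suc j0) (t mod 2 ^ Suc j0))"
proof -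
  have "j0 < m" "J \<subseteq> {j0..}"
    using assms(2,3) by auto
  then have "2 ^ Suc j0 dvd (2::nat) ^ m"
    by (simp add: le_imp_power_dvd Suc_le_eq del: power_Suc)
  with assms \<open>J \<subseteq> {j0..}\<close> show ?thesis
    using sum_walsh_lessThan[of J j0 "2^m - t"]
    by (auto simp: sum_walsh_top_eq_neg_lessThan abs_mult tent_mod_diff)
qed

lemma sum_walsh_top_small:
  assumes "J \<subseteq> {j0..<m}" "t \<le> 2 ^ j0" "t \<le> 2 ^ m"
  shows "(\<Sum>N\<in>{2^m-t..<2^m}. walsh J N) = (-1) ^ card J * real t"
proof -
  have "bit N j" if N: "N \<in> {2^m-t..<2^m}" and j: "j \<in> J" for N j
  proof -
    have "j < m" "t \<le> 2 ^ j"
      using j assms order_trans[OF assms(2) power_increasing[of j0 j "2::nat"]] by auto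
    have pw: "2 ^ j * 2 ^ (m - j) = (2::nat) ^ m"
      using \<open>j < m\<close> by (simp flip: power_add)
    then have "2 ^ j * (2 ^ (m - j) - 1) \<le> N"
      using N \<open>t \<le> 2 ^ j\<close> by (simp add: diff_mult_distrib2) linarith
    moreover have "N < 2 ^ j * Suc (2 ^ (m - j) - 1)"
      using N pw by simp
    ultimately have "N div 2 ^ j = 2 ^ (m - j) - 1"
      by (rule div_nat_eqI)
    moreover have "odd ((2::nat) ^ (m - j) - 1)"
      using \<open>j < m\<close> by simp
    ultimately show ?thesis
      by (simp add: bit_iff_odd)
  qed
  then have "walsh J N = (-1) ^ card J" if "N \<in> {2^m-t..<2^m}" for N
    using that unfolding walsh_def by (metis (mono_tags, lifting) Collect_cong Collect_mem_eq)
  then show ?thesis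
    using assms(3) by (simp add: of_nat_diff)
qed

section \<open>Blocks of coordinates\<close>

definition coords :: "nat \<Rightarrow> nat \<Rightarrow> nat set" where
  "coords m i = {(i - 1) * m + 1 .. i * m}"

text \<open>\<open>bitpos m i j\<close> is the coordinate of \<open>y\<^sup>i\<^sub>m\<^sub>-\<^sub>j\<close>, the bit of weight \<open>2\<^sup>j\<close> in \<open>Bin(y\<^sup>i)\<close>.\<close>
definition bitpos :: "nat \<Rightarrow> nat \<Rightarrow> nat \<Rightarrow> nat" where
  "bitpos m i j = (i - 1) * m + (m - j)"

definition block_enc :: "nat \<Rightarrow> nat \<Rightarrow> nat \<Rightarrow> nat set" where
  "block_enc m i N = bitpos m i ` {j. j < m \<and> bit N j}"

definition block_bits :: "nat \<Rightarrow> nat set \<Rightarrow> nat \<Rightarrow> nat set" where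
  "block_bits m S i = {j. j < m \<and> bitpos m i j \<in> S}"

lemma block_eq_Int_coords: "block m S i = S \<inter> coords m i"
  by (simp add: block_def coords_def)

lemma coords_Suc: "coords m (Suc i) = {i * m + 1 .. i * m + m}"
  by (simp add: coords_def)

lemma finite_coords: "finite (coords m i)"
  by (simp add: coords_def)

lemma inj_on_bitpos: "inj_on (bitpos m i) {..<m}"
  by (auto simp: inj_on_def bitpos_def)

lemma bitpos_in_coords: "1 \<le> i \<Longrightarrow> j < m \<Longrightarrow> bitpos m i j \<in> coords m i"
  by (cases i) (auto simp: bitpos_def coords_Suc)

lemma block_bits_subset: "block_bits m S i \<subseteq> {..<m}"
  by (auto simp: block_bits_def)

lemma Bin_block_enc:
  assumes "N < 2 ^ m"
  shows "Bin m (block_enc m i N) i = N"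
proof -
  have "bitpos m i j \<in> block_enc m i N \<longleftrightarrow> bit N j" if "j < m" for j
    using that inj_on_bitpos[of m i] unfolding block_enc_def inj_on_def by auto
  then have "Bin m (block_enc m i N) i = (\<Sum>j<m. push_bit j (of_bool (bit N j)))"
    unfolding Bin_def by (intro sum.cong) (auto simp: bitpos_def push_bit_eq_mult)
  also have "\<dots> = take_bit m N"
    by (simp add: take_bit_sum lessThan_atLeast0)
  finally show ?thesis
    using assms by (simp add: take_bit_eq_mod)
qed

lemma bij_betw_block_enc:
  assumes "1 \<le> i"
  shows "bij_betw (block_enc m i) {..<2^m} (Pow (coords m i))"
proof -
  have inj: "inj_on (block_enc m i) {..<2^m}"
    by (metis Bin_block_enc inj_onI lessThan_iff)
  moreover have "block_enc m i ` {..<2^m} = Pow (coords m i)"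
  proof (rule card_subset_eq)
    show "block_enc m i ` {..<2^m} \<subseteq> Pow (coords m i)"
      using bitpos_in_coords[OF assms] by (auto simp: block_enc_def)
    show "card (block_enc m i ` {..<2^m}) = card (Pow (coords m i))"
      using card_image[OF inj] assms by (cases i) (simp_all add: card_Pow coords_Suc)
  qed (simp add: coords_def)
  ultimately show ?thesis
    by (simp add: bij_betw_def)
qed

lemma hbit_block_enc: "N < 2 ^ m \<Longrightarrow> hbit m t (block_enc m i N) i \<longleftrightarrow> 2 ^ m - t \<le> N"
  by (simp add: hbit_def Bin_block_enc)

lemma card_Int_block_enc: "card (S \<inter> block_enc m i N) = card {j\<in>block_bits m S i. bit N j}"
proof -
  have "S \<inter> block_enc m i N = bitpos m i ` {j\<in>block_bits m S i. bit N j}"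
    unfolding block_enc_def block_bits_def by auto
  moreover have "inj_on (bitpos m i) {j\<in>block_bits m S i. bit N j}"
    using inj_on_bitpos by (rule inj_on_subset) (auto simp: block_bits_def)
  ultimately show ?thesis
    by (simp add: card_image)
qed

lemma block_eq_image_block_bits:
  assumes "1 \<le> i"
  shows "block m S i = bitpos m i ` block_bits m S i"
proof -
  have "x \<in> bitpos m i ` {..<m}" if "x \<in> coords m i" for x
  proof
    show "x = bitpos m i ((i - 1) * m + m - x)" "(i - 1) * m + m - x \<in> {..<m}"
      using that assms by (cases i; auto simp: coords_Suc bitpos_def)+
  qed
  then show ?thesis
    unfolding block_eq_Int_coords block_bits_def using bitpos_in_coords[OF assms] by auto
qed

lemma card_block: "1 \<le> i \<Longrightarrow> card (block m S i) = card (block_bits m S i)"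
  using block_eq_image_block_bits inj_on_subset[OF inj_on_bitpos block_bits_subset]
  by (simp add: card_image)

lemma topidx_eq:
  assumes "1 \<le> i" "block_bits m S i \<noteq> {}"
  shows "topidx m S i = m - Min (block_bits m S i)"
proof -
  let ?J = "block_bits m S i"
  have fin: "finite ?J"
    using finite_subset[OF block_bits_subset] by simp
  have "Max (bitpos m i ` ?J) = bitpos m i (Min ?J)"
  proof (rule Max_eqI)
    show "bitpos m i (Min ?J) \<in> bitpos m i ` ?J"
      using fin assms(2) by simp
    fix y
    assume "y \<in> bitpos m i ` ?J"
    then obtain j where "j \<in> ?J" "y = bitpos m i j"
      by blast
    moreover from \<open>j \<in> ?J\<close> have "Min ?J \<le> j"
      using fin by simp
    ultimately show "y \<le> bitpos m i (Min ?J)"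
      by (simp add: bitpos_def)
  qed (use fin in simp)
  moreover have "Min ?J < m"
    using Min_in[OF fin assms(2)] block_bits_subset[of m S i] by blast
  ultimately show ?thesis
    unfolding topidx_def block_eq_image_block_bits[OF assms(1)] by (simp add: bitpos_def)
qed

lemma hbit_Int_coords:
  assumes "1 \<le> i"
  shows "hbit m t (Y \<inter> coords m i) i = hbit m t Y i"
proof -
  have "Bin m (Y \<inter> coords m i) i = Bin m Y i"
    unfolding Bin_def using bitpos_in_coords[OF assms]
    by (intro sum.cong refl) (auto simp: bitpos_def)
  then show ?thesis
    by (simp add: hbit_def)
qed

lemma hbit_cong:
  "1 \<le> i \<Longrightarrow> Y \<inter> coords m i = Y' \<inter> coords m i \<Longrightarrow> hbit m t Y i = hbit m t Y' i"
  by (metis hbit_Int_coords)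

lemma atLeastAtMost_mult_Suc: "{1..m * Suc n} = {1..m * n} \<union> coords m (Suc n)"
  by (auto simp: coords_Suc mult.commute)

lemma coords_subset: "i \<in> {1..n} \<Longrightarrow> coords m i \<subseteq> {1..m * n}"
  by (auto simp: coords_def intro: order_trans[OF _ mult_le_mono1[of i n m]] simp: mult.commute)

lemma coords_Suc_disjoint: "{1..m * n} \<inter> coords m (Suc n) = {}"
  by (auto simp: coords_Suc)

lemma card_eq_sum_card_Int_coords:
  assumes "A \<subseteq> {1..m * n}"
  shows "card A = (\<Sum>i\<in>{1..n}. card (A \<inter> coords m i))"
proof -
  have "card (A \<inter> {1..m * n}) = (\<Sum>i\<in>{1..n}. card (A \<inter> coords m i))" for A
  proof (induction n)
    case (Suc n)
    have "A \<inter> {1..m * Suc n} = (A \<inter> {1..m * n}) \<union> (A \<inter> coords m (Suc n))"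
      unfolding atLeastAtMost_mult_Suc by auto
    moreover have "card (A \<inter> {1..m * n} \<union> A \<inter> coords m (Suc n)) =
        card (A \<inter> {1..m * n}) + card (A \<inter> coords m (Suc n))"
      by (rule card_Un_disjoint) (use coords_Suc_disjoint[of m n] in \<open>auto simp: coords_def mult.commute\<close>)
    ultimately have "card (A \<inter> {1..m * Suc n}) = card (A \<inter> {1..m * n}) + card (A \<inter> coords m (Suc n))"
      by simp
    with Suc.IH show ?case
      by simp
  qed simp
  with assms show ?thesis
    by (metis inf.absorb1)
qed

section \<open>Factorisation over blocks\<close>

lemma hbit_pattern_Un:
  assumes "Y \<subseteq> {1..m * n}" "W \<subseteq> coords m (Suc n)"
  shows "{i\<in>{1..Suc n}. hbit m t (Y \<union> W) i} =
    {i\<in>{1..n}. hbit m t Y i} \<union> {i. i = Suc n \<and> hbit m t W i}"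
proof -
  have "hbit m t (Y \<union> W) i = hbit m t Y i" if "i \<in> {1..n}" for i
    using assms coords_subset[OF that, of m] coords_Suc_disjoint[of m n] that
    by (intro hbit_cong) auto
  moreover have "hbit m t (Y \<union> W) (Suc n) = hbit m t W (Suc n)"
    using assms coords_Suc_disjoint[of m n] by (intro hbit_cong) auto
  ultimately show ?thesis
    by (auto simp: le_Suc_eq)
qed

lemma prod_coords_Un:
  assumes "Y \<subseteq> {1..m * n}" "W \<subseteq> coords m (Suc n)"
  shows "(\<Prod>i\<in>{1..Suc n}. v i ((Y \<union> W) \<inter> coords m i)) =
    (\<Prod>i\<in>{1..n}. v i (Y \<inter> coords m i)) * v (Suc n) W"
proof -
  have "(Y \<union> W) \<inter> coords m i = Y \<inter> coords m i" if "i \<in> {1..n}" for i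
    using assms coords_subset[OF that, of m] coords_Suc_disjoint[of m n] by auto
  moreover have "(Y \<union> W) \<inter> coords m (Suc n) = W"
    using assms coords_Suc_disjoint[of m n] by auto
  ultimately show ?thesis
    by (simp add: prod.nat_ivl_Suc' mult.commute)
qed

lemma sum_Pow_mult_Suc_split:
  "(\<Sum>Y\<in>Pow {1..m * Suc n}. F {i\<in>{1..Suc n}. hbit m t Y i} *
      (\<Prod>i\<in>{1..Suc n}. v i (Y \<inter> coords m i))) =
    (\<Sum>Y\<in>Pow {1..m * n}. \<Sum>W\<in>Pow (coords m (Suc n)).
      F ({i\<in>{1..n}. hbit m t Y i} \<union> {i. i = Suc n \<and> hbit m t W i}) *
      ((\<Prod>i\<in>{1..n}. v i (Y \<inter> coords m i)) * v (Suc n) W))"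
  unfolding atLeastAtMost_mult_Suc
  unfolding sum_Pow_Un_disjoint[OF finite_atLeastAtMost _ coords_Suc_disjoint, OF finite_coords]
proof (intro sum.cong refl)
  fix Y W
  assume "Y \<in> Pow {1..m * n}" "W \<in> Pow (coords m (Suc n))"
  then show "F {i\<in>{1..Suc n}. hbit m t (Y \<union> W) i} * (\<Prod>i\<in>{1..Suc n}. v i ((Y \<union> W) \<inter> coords m i)) =
      F ({i\<in>{1..n}. hbit m t Y i} \<union> {i. i = Suc n \<and> hbit m t W i}) *
      ((\<Prod>i\<in>{1..n}. v i (Y \<inter> coords m i)) * v (Suc n) W)"
    by (simp only: Pow_iff hbit_pattern_Un prod_coords_Un)
qed

definition block_weight :: "nat \<Rightarrow> nat \<Rightarrow> (nat \<Rightarrow> nat set \<Rightarrow> real) \<Rightarrow> nat \<Rightarrow> bool \<Rightarrow> real" where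
  "block_weight m t v i b = (\<Sum>B\<in>Pow (coords m i). if hbit m t B i = b then v i B else 0)"

lemma sum_block_weight_split:
  "(\<Sum>W\<in>Pow (coords m i). v i W * F (X \<union> {j. j = i \<and> hbit m t W j})) =
    block_weight m t v i True * F (insert i X) + block_weight m t v i False * F X"
proof -
  have "v i W * F (X \<union> {j. j = i \<and> hbit m t W j}) =
      (if hbit m t W i = True then v i W else 0) * F (insert i X) +
      (if hbit m t W i = False then v i W else 0) * F X" for W
  proof -
    have "X \<union> {j. j = i \<and> hbit m t W j} = (if hbit m t W i then insert i X else X)"
      by auto
    then show ?thesis
      by simp
  qed
  then show ?thesis
    by (simp only: block_weight_def sum.distrib sum_distrib_right)
qed

lemma sum_Pow_hbit_factor:
  "(\<Sum>Y\<in>Pow {1..m * n}. F {i\<in>{1..n}. hbit m t Y i} * (\<Prod>i\<in>{1..n}. v i (Y \<inter> coords m i))) =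
    (\<Sum>X\<in>Pow {1..n}. F X * (\<Prod>i\<in>{1..n}. block_weight m t v i (i \<in> X)))"
proof (induction n arbitrary: F)
  case (Suc n)
  define C where "C X = (\<Prod>i\<in>{1..n}. block_weight m t v i (i \<in> X))" for X
  define e where "e W = {i. i = Suc n \<and> hbit m t W i}" for W
  let ?B = "coords m (Suc n)"
  have "(\<Sum>Y\<in>Pow {1..m * Suc n}. F {i\<in>{1..Suc n}. hbit m t Y i} *
        (\<Prod>i\<in>{1..Suc n}. v i (Y \<inter> coords m i))) =
      (\<Sum>W\<in>Pow ?B. v (Suc n) W * (\<Sum>Y\<in>Pow {1..m * n}.
        F ({i\<in>{1..n}. hbit m t Y i} \<union> e W) * (\<Prod>i\<in>{1..n}. v i (Y \<inter> coords m i))))"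
    unfolding sum_Pow_mult_Suc_split e_def by (subst sum.swap) (simp add: sum_distrib_left mult_ac)
  also have "\<dots> = (\<Sum>W\<in>Pow ?B. v (Suc n) W * (\<Sum>X\<in>Pow {1..n}. F (X \<union> e W) * C X))"
    using Suc.IH[of "\<lambda>X. F (X \<union> e W)" for W] by (simp add: C_def)
  also have "\<dots> = (\<Sum>X\<in>Pow {1..n}. C X * (\<Sum>W\<in>Pow ?B. v (Suc n) W * F (X \<union> e W)))"
    unfolding sum_distrib_left by (subst sum.swap) (simp add: mult_ac)
  also have "\<dots> = (\<Sum>X\<in>Pow {1..n}. C X * (block_weight m t v (Suc n) True * F (insert (Suc n) X) +
      block_weight m t v (Suc n) False * F X))"
    by (simp only: e_def sum_block_weight_split)
  also have "\<dots> = (\<Sum>X\<in>Pow {1..Suc n}. F X * (\<Prod>i\<in>{1..Suc n}. block_weight m t v i (i \<in> X)))"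
    unfolding C_def by (rule sum_Pow_Suc_prod_mem[symmetric])
  finally show ?case .
qed simp

lemma fourier_half_Red:
  assumes "S \<subseteq> {1..m * n}"
  shows "fourier (1/2) (m * n) (Red m t n f) S = (\<Sum>X\<in>Pow {1..n}. f X *
    (\<Prod>i\<in>{1..n}. (1/2) ^ m * block_weight m t (\<lambda>_ B. (-1) ^ card (S \<inter> B)) i (i \<in> X)))"
proof -
  have "mu (1/2) (m * n) Y * Red m t n f Y * ubasis (1/2) S Y = (1/2) ^ (m * n) *
      (f {i\<in>{1..n}. hbit m t Y i} * (\<Prod>i\<in>{1..n}. (-1) ^ card (S \<inter> (Y \<inter> coords m i))))"
    if "Y \<in> Pow {1..m * n}" for Y
  proof -
    have "card Y \<le> m * n"
      using that card_mono[of "{1..m * n}" Y] by auto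
    then have "mu (1/2) (m * n) Y = (1/2) ^ (m * n)"
      by (simp add: mu_def flip: power_add)
    moreover have "card (S \<inter> Y) = (\<Sum>i\<in>{1..n}. card (S \<inter> (Y \<inter> coords m i)))"
      using assms by (subst card_eq_sum_card_Int_coords[of _ m n]) (auto simp: Int_assoc)
    ultimately show ?thesis
      by (simp add: ubasis_def Red_def power_sum)
  qed
  then have "fourier (1/2) (m * n) (Red m t n f) S = (1/2) ^ (m * n) * (\<Sum>Y\<in>Pow {1..m * n}.
      f {i\<in>{1..n}. hbit m t Y i} * (\<Prod>i\<in>{1..n}. (-1) ^ card (S \<inter> (Y \<inter> coords m i))))"
    unfolding fourier_def sum_distrib_left by (intro sum.cong) auto
  also have "\<dots> = (1/2) ^ (m * n) * (\<Sum>X\<in>Pow {1..n}. f X *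
      (\<Prod>i\<in>{1..n}. block_weight m t (\<lambda>_ B. (-1) ^ card (S \<inter> B)) i (i \<in> X)))"
    using sum_Pow_hbit_factor[where F = f and v = "\<lambda>_ B. (-1) ^ card (S \<inter> B)"] by simp
  moreover have "(1/2::real) ^ (m * n) = (\<Prod>i\<in>{1..n}. (1/2) ^ m)"
    by (simp add: power_mult)
  ultimately show ?thesis
    by (simp add: sum_distrib_left prod.distrib mult_ac)
qed

lemma block_weight_sign_eq_sum_walsh:
  assumes "1 \<le> i"
  shows "block_weight m t (\<lambda>_ B. (-1) ^ card (S \<inter> B)) i b =
    (\<Sum>N<2^m. if (2^m - t \<le> N) = b then walsh (block_bits m S i) N else 0)"
  unfolding block_weight_def
  by (rule sum.reindex_bij_betw[OF bij_betw_block_enc[OF assms], symmetric, THEN trans])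
    (intro sum.cong refl, simp add: hbit_block_enc card_Int_block_enc walsh_def)

definition biased_weight :: "real \<Rightarrow> bool \<Rightarrow> bool \<Rightarrow> real" where
  "biased_weight p s b = (if b then p else 1 - p) *
    (if s then if b then - sqrt ((1 - p) / p) else sqrt (p / (1 - p)) else 1)"

lemma fourier_eq_sum_prod_biased_weight:
  assumes "T \<subseteq> {1..n}"
  shows "fourier p n f T = (\<Sum>X\<in>Pow {1..n}. f X * (\<Prod>i\<in>{1..n}. biased_weight p (i \<in> T) (i \<in> X)))"
  unfolding fourier_def
proof (intro sum.cong refl)
  fix X
  assume X: "X \<in> Pow {1..n}"
  then have "finite X" "card ({1..n} - X) = n - card X"
    by (auto simp: card_Diff_subset finite_subset)
  with X have "mu p n X = (\<Prod>i\<in>{1..n}. if i \<in> X then p else 1 - p)"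
    by (simp add: prod_if_mem_eq_power mu_def Int_absorb1)
  moreover have "ubasis p T X = (\<Prod>i\<in>{1..n}. if i \<in> T then
      if i \<in> X then - sqrt ((1 - p) / p) else sqrt (p / (1 - p)) else 1)"
    using assms finite_subset[OF assms]
    by (simp add: prod.inter_restrict[symmetric] Int_absorb1 prod_if_mem_eq_power ubasis_def)
  ultimately show "mu p n X * f X * ubasis p T X =
      f X * (\<Prod>i\<in>{1..n}. biased_weight p (i \<in> T) (i \<in> X))"
    by (simp add: biased_weight_def prod.distrib)
qed

lemma block_weight_sign_eq_biased_weight:
  fixes S :: "nat set"
  assumes "1 \<le> i" "0 < t" "t < 2 ^ m" "p = real t / 2 ^ m"
  defines "J \<equiv> block_bits m S i"
  shows "(1/2) ^ m * block_weight m t (\<lambda>_ B. (-1) ^ card (S \<inter> B)) i b =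
    (if J = {} then 1 else - (\<Sum>N\<in>{2^m-t..<2^m}. walsh J N) / t * sqrt (p / (1 - p))) *
    biased_weight p (J \<noteq> {}) b"
proof -
  define \<sigma> where "\<sigma> = (\<Sum>N\<in>{2^m-t..<2^m}. walsh J N)"
  have "{N\<in>{..<2^m}. (2^m - t \<le> N) = True} = {2^m-t..<2^m}"
    "{N\<in>{..<2^m}. (2^m - t \<le> N) = False} = {..<2^m-t}"
    by auto
  then have weight_True: "block_weight m t (\<lambda>_ B. (-1) ^ card (S \<inter> B)) i True = \<sigma>"
    and weight_False: "block_weight m t (\<lambda>_ B. (-1) ^ card (S \<inter> B)) i False = (\<Sum>N<2^m-t. walsh J N)"
    unfolding block_weight_sign_eq_sum_walsh[OF assms(1)] \<sigma>_def J_def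
    by (simp_all only: sum.inter_filter[symmetric] finite_lessThan)
  have p: "0 < p" "p < 1" "p * 2 ^ m = t"
    using assms(2-4) by (simp_all add: divide_less_eq)
  show ?thesis
  proof (cases "J = {}")
    case True
    then have "\<sigma> = t" "(\<Sum>N<2^m-t. walsh J N) = 2 ^ m - real t"
      using assms(3) by (simp_all add: \<sigma>_def walsh_def of_nat_diff)
    with True p show ?thesis
      by (cases b) (simp_all add: weight_True weight_False biased_weight_def field_simps)
  next
    case False
    have "J \<subseteq> {..<m}"
      unfolding J_def by (rule block_bits_subset)
    then have "J \<subseteq> {Min J..<m}" "finite J"
      using subset_atLeastLessThan_Min False finite_subset by blast+
    then have "(\<Sum>N<2^m-t. walsh J N) = - \<sigma>"
      using sum_walsh_top_eq_neg_lessThan[of J "Min J" m t] False assms(3) by (simp add: \<sigma>_def)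
    moreover have "(1/2) ^ m = p / t"
      using p assms(2) by (simp add: field_simps)
    moreover define sp sq where "sp = sqrt (p / (1 - p))" and "sq = sqrt ((1 - p) / p)"
    moreover have "sp * sq = 1" "(1 - p) * (sp * sp) = p"
      using p by (simp_all add: sp_def sq_def real_sqrt_mult[symmetric])
    ultimately show ?thesis
      using False unfolding biased_weight_def sp_def[symmetric] sq_def[symmetric]
      by (cases b) (simp_all add: weight_True weight_False \<sigma>_def, simp_all add: algebra_simps)
  qed
qed

lemma blocksupp_subset: "blocksupp m n S \<subseteq> {1..n}"
  by (auto simp: blocksupp_def)

lemma mem_blocksupp_iff: "i \<in> blocksupp m n S \<longleftrightarrow> i \<in> {1..n} \<and> block_bits m S i \<noteq> {}"
proof -
  have "0 < card (block m S i) \<longleftrightarrow> block_bits m S i \<noteq> {}" if "1 \<le> i"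
    using card_block[OF that] finite_subset[OF block_bits_subset] by (simp add: card_gt_0_iff)
  then show ?thesis
    by (auto simp: blocksupp_def)
qed

lemma fourier_Red_eq_prod:
  assumes "0 < t" "t < 2 ^ m" "p = real t / 2 ^ m" "S \<subseteq> {1..m * n}"
  shows "fourier (1/2) (m * n) (Red m t n f) S =
    (\<Prod>i\<in>blocksupp m n S. - (\<Sum>N\<in>{2^m-t..<2^m}. walsh (block_bits m S i) N) / t * sqrt (p / (1 - p)))
    * fourier p n f (blocksupp m n S)"
proof -
  define r where "r i = (if block_bits m S i = {} then 1
    else - (\<Sum>N\<in>{2^m-t..<2^m}. walsh (block_bits m S i) N) / t * sqrt (p / (1 - p)))" for i
  have "(1/2) ^ m * block_weight m t (\<lambda>_ B. (-1) ^ card (S \<inter> B)) i b =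
      r i * biased_weight p (i \<in> blocksupp m n S) b" if "i \<in> {1..n}" for i b
    using that block_weight_sign_eq_biased_weight[OF _ assms(1-3), of i S b]
    by (simp add: r_def mem_blocksupp_iff)
  then have "fourier (1/2) (m * n) (Red m t n f) S = (\<Sum>X\<in>Pow {1..n}. f X *
      (\<Prod>i\<in>{1..n}. r i * biased_weight p (i \<in> blocksupp m n S) (i \<in> X)))"
    unfolding fourier_half_Red[OF assms(4)] by (simp cong: prod.cong_simp)
  also have "\<dots> = (\<Prod>i\<in>{1..n}. r i) * fourier p n f (blocksupp m n S)"
    by (simp add: fourier_eq_sum_prod_biased_weight[OF blocksupp_subset] prod.distrib sum_distrib_left mult_ac)
  also have "(\<Prod>i\<in>{1..n}. r i) = (\<Prod>i\<in>blocksupp m n S. r i)"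
    by (rule prod.mono_neutral_right) (auto simp: r_def mem_blocksupp_iff)
  finally show ?thesis
    by (simp add: r_def mem_blocksupp_iff)
qed

section \<open>Absolute values and signs\<close>

lemma acoef_eq_tent: "j < m \<Longrightarrow> acoef m t (m - j) = tent (2 ^ Suc j) (t mod 2 ^ Suc j)"
  by (simp add: acoef_def tent_def Suc_diff_le)

lemma block_bits_blocksupp:
  assumes "i \<in> blocksupp m n S"
  shows "block_bits m S i \<subseteq> {Min (block_bits m S i)..<m}" "Min (block_bits m S i) \<in> block_bits m S i"
    "topidx m S i = m - Min (block_bits m S i)" "card (block m S i) = card (block_bits m S i)"
proof -
  have "1 \<le> i" "block_bits m S i \<noteq> {}"
    using assms by (simp_all add: mem_blocksupp_iff)
  then show "block_bits m S i \<subseteq> {Min (block_bits m S i)..<m}" "Min (block_bits m S i) \<in> block_bits m S i"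
    "topidx m S i = m - Min (block_bits m S i)" "card (block m S i) = card (block_bits m S i)"
    using subset_atLeastLessThan_Min[OF block_bits_subset] finite_subset[OF block_bits_subset]
    by (simp_all add: topidx_eq card_block)
qed

lemma abs_sum_walsh_block_bits:
  assumes "i \<in> blocksupp m n S" "t \<le> 2 ^ m"
  shows "\<bar>\<Sum>N\<in>{2^m-t..<2^m}. walsh (block_bits m S i) N\<bar> = acoef m t (topidx m S i)"
proof -
  note J = block_bits_blocksupp[OF assms(1)]
  have "Min (block_bits m S i) < m"
    using J(1,2) by auto
  then show ?thesis
    using abs_sum_walsh_top[OF _ J(2,1) assms(2)] finite_subset[OF block_bits_subset]
    by (simp add: J(3) acoef_eq_tent)
qed

lemma le_power_if_le_floor_log:
  assumes "0 < t" "p = real t / 2 ^ m" "s \<le> m" "int s \<le> \<lfloor>log 2 (1 / p)\<rfloor>"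
  shows "t \<le> 2 ^ (m - s)"
proof -
  have "0 < p"
    using assms(1,2) by simp
  have "real s \<le> log 2 (1 / p)"
    using assms(4) by (simp add: le_floor_iff)
  then have "2 ^ s \<le> 1 / p"
    using \<open>0 < p\<close> by (simp add: le_log_iff powr_realpow)
  then have "2 ^ s * real t \<le> 2 ^ m"
    using \<open>0 < p\<close> assms(2) by (simp add: field_simps)
  also have "(2::real) ^ m = 2 ^ s * 2 ^ (m - s)"
    using assms(3) by (simp flip: power_add)
  finally have "real t \<le> 2 ^ (m - s)"
    by simp
  then show ?thesis
    by (simp flip: of_nat_le_iff)
qed

lemma sum_walsh_block_bits_small:
  assumes "i \<in> blocksupp m n S" "0 < t" "t \<le> 2 ^ m" "p = real t / 2 ^ m"
    "int (topidx m S i) \<le> \<lfloor>log 2 (1 / p)\<rfloor>"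
  shows "(\<Sum>N\<in>{2^m-t..<2^m}. walsh (block_bits m S i) N) = (-1) ^ card (block m S i) * real t"
proof -
  note J = block_bits_blocksupp[OF assms(1)]
  have "Min (block_bits m S i) < m"
    using J(1,2) by auto
  then have "t \<le> 2 ^ Min (block_bits m S i)"
    using le_power_if_le_floor_log[OF assms(2,4) _ assms(5)[unfolded J(3)]] by simp
  then show ?thesis
    using sum_walsh_top_small[OF J(1) _ assms(3)] by (simp add: J(4))
qed

lemma card_eq_sum_card_block:
  assumes "S \<subseteq> {1..m * n}"
  shows "card S = (\<Sum>i\<in>blocksupp m n S. card (block m S i))"
proof -
  have "card S = (\<Sum>i\<in>{1..n}. card (block m S i))"
    using card_eq_sum_card_Int_coords[OF assms] by (simp add: block_eq_Int_coords)
  also have "\<dots> = (\<Sum>i\<in>blocksupp m n S. card (block m S i))"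
    by (rule sum.mono_neutral_right) (auto simp: blocksupp_def)
  finally show ?thesis .
qed

lemma abs_fourier_Red:
  assumes "0 < t" "t < 2 ^ m" "p = real t / 2 ^ m" "S \<subseteq> {1..m * n}"
  shows "\<bar>fourier (1/2) (m * n) (Red m t n f) S\<bar> =
    (\<Prod>i\<in>blocksupp m n S. real (acoef m t (topidx m S i)) / real t)
    * sqrt (p / (1 - p)) ^ card (blocksupp m n S) * \<bar>fourier p n f (blocksupp m n S)\<bar>"
proof -
  define sp where "sp = sqrt (p / (1 - p))"
  have "0 \<le> sp"
    using assms(2,3) by (simp add: sp_def divide_less_eq)
  have "\<bar>fourier (1/2) (m * n) (Red m t n f) S\<bar> = (\<Prod>i\<in>blocksupp m n S.
      \<bar>- (\<Sum>N\<in>{2^m-t..<2^m}. walsh (block_bits m S i) N) / t * sp\<bar>) * \<bar>fourier p n f (blocksupp m n S)\<bar>"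
    unfolding fourier_Red_eq_prod[OF assms] sp_def by (simp only: abs_mult abs_prod)
  also have "\<dots> = (\<Prod>i\<in>blocksupp m n S. real (acoef m t (topidx m S i)) / real t * sp)
      * \<bar>fourier p n f (blocksupp m n S)\<bar>"
    using abs_sum_walsh_block_bits assms(2) \<open>0 \<le> sp\<close>
    by (simp add: abs_mult cong: prod.cong_simp)
  finally show ?thesis
    unfolding sp_def by (simp only: prod.distrib prod_constant)
qed

lemma fourier_Red_if_small_blocks:
  assumes "0 < t" "t < 2 ^ m" "p = real t / 2 ^ m" "S \<subseteq> {1..m * n}"
    and "\<forall>i\<in>blocksupp m n S. int (topidx m S i) \<le> \<lfloor>log 2 (1 / p)\<rfloor>"
  shows "fourier (1/2) (m * n) (Red m t n f) S =
    (- sqrt (p / (1 - p))) ^ card (blocksupp m n S) * (-1) ^ card S * fourier p n f (blocksupp m n S)"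
proof -
  define sp where "sp = sqrt (p / (1 - p))"
  have "(\<Prod>i\<in>blocksupp m n S. - (\<Sum>N\<in>{2^m-t..<2^m}. walsh (block_bits m S i) N) / t * sp) =
      (\<Prod>i\<in>blocksupp m n S. - sp * (-1) ^ card (block m S i))"
    using sum_walsh_block_bits_small[OF _ assms(1) _ assms(3)] assms(1,2,5)
    by (intro prod.cong refl) simp
  also have "\<dots> = (- sp) ^ card (blocksupp m n S) * (\<Prod>i\<in>blocksupp m n S. (-1) ^ card (block m S i))"
    by (simp only: prod.distrib prod_constant)
  also have "(\<Prod>i\<in>blocksupp m n S. (-1::real) ^ card (block m S i)) = (-1) ^ card S"
    by (simp add: card_eq_sum_card_block[OF assms(4)] power_sum)
  finally show ?thesis
    unfolding fourier_Red_eq_prod[OF assms(1-4)] sp_def by simp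
qed

theorem proposition2p2:
  fixes m t n :: nat and p :: real and f :: "nat set \<Rightarrow> real" and S :: "nat set"
  assumes "m \<ge> 1" and "1 \<le> t" and "t \<le> 2 ^ (m - 1)"
    and "p = real t / 2 ^ m"
    and "S \<subseteq> {1..m * n}"
  shows "\<bar>fourier (1/2) (m * n) (Red m t n f) S\<bar> =
           (\<Prod>i\<in>blocksupp m n S. real (acoef m t (topidx m S i)) / real t)
           * (sqrt (p / (1 - p))) ^ card (blocksupp m n S)
           * \<bar>fourier p n f (blocksupp m n S)\<bar>
         \<and> ((\<forall>i\<in>blocksupp m n S. int (topidx m S i) \<le> \<lfloor>log 2 (1 / p)\<rfloor>) \<longrightarrow>
           fourier (1/2) (m * n) (Red m t n f) S =
           (- sqrt (p / (1 - p))) ^ card (blocksupp m n S) * (-1) ^ card S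
           * fourier p n f (blocksupp m n S))"
proof -
  \<comment> \<open>Of \<open>t \<le> 2 ^ (m - 1)\<close>, i.e. \<open>p \<le> 1/2\<close>, only \<open>t < 2 ^ m\<close> is needed.\<close>
  have "2 ^ (m - 1) < (2::nat) ^ m"
    using assms(1) by simp
  then have "t < 2 ^ m"
    using assms(3) by linarith
  moreover have "0 < t"
    using assms(2) by simp
  ultimately show ?thesis
    using abs_fourier_Red[of t m p S n f] fourier_Red_if_small_blocks[of t m p S n f] assms(4,5)
    by simp
qed

end
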